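(* There exist a virtually abelian group $G$ and a finite generating set $S$ of $G$ (with $S=S^{-1}$, $e\notin S$) such that every finite-index free abelian subgroup of $G$ contains an element $g$ with $\kappa(g)>0$ and an element $g'$ with $\kappa(g')<0$, curvature computed with respect to $S$.
   Context: For a group $G$ with finite generating set $S$ ($S=S^{-1}$, $e\notin S$), $|x|$ denotes the word length of $x\in G$ with respect to $S$. For $g\in G$ define $\mathrm{Av}(g)=\frac{1}{|S|}\sum_{a\in S}|a^{-1}ga|$, and for $g\neq e$ define the curvature $\kappa(g)=\frac{|g|-\mathrm{Av}(g)}{|g|}$. *)

theory Defs
  imports "HOL-Algebra.Algebra" "HOL-Algebra.Free_Abelian_Groups" Complex_Main
begin

definition word_prod :: "('a, 'b) monoid_scheme \<Rightarrow> 'a list \<Rightarrow> 'a" where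
  "word_prod G ws = foldr (\<lambda>x y. x \<otimes>\<^bsub>G\<^esub> y) ws \<one>\<^bsub>G\<^esub>"

definition sym_gen_set :: "('a, 'b) monoid_scheme \<Rightarrow> 'a set \<Rightarrow> bool" where
  "sym_gen_set G S \<longleftrightarrow> finite S \<and> S \<subseteq> carrier G \<and> (\<forall>a\<in>S. inv\<^bsub>G\<^esub> a \<in> S)
     \<and> \<one>\<^bsub>G\<^esub> \<notin> S \<and> generate G S = carrier G"

definition word_length :: "('a, 'b) monoid_scheme \<Rightarrow> 'a set \<Rightarrow> 'a \<Rightarrow> nat" where
  "word_length G S x = (LEAST n. \<exists>ws. set ws \<subseteq> S \<and> length ws = n \<and> word_prod G ws = x)"

definition Av :: "('a, 'b) monoid_scheme \<Rightarrow> 'a set \<Rightarrow> 'a \<Rightarrow> real" where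
  "Av G S g = (1 / real (card S)) *
     (\<Sum>a\<in>S. real (word_length G S (inv\<^bsub>G\<^esub> a \<otimes>\<^bsub>G\<^esub> g \<otimes>\<^bsub>G\<^esub> a)))"

(* curvature kappa(g) = (|g| - Av(g)) / |g|, meaningful for g \<noteq> e *)
definition curvature :: "('a, 'b) monoid_scheme \<Rightarrow> 'a set \<Rightarrow> 'a \<Rightarrow> real" where
  "curvature G S g = (real (word_length G S g) - Av G S g) / real (word_length G S g)"

definition finite_index_subgroup :: "('a, 'b) monoid_scheme \<Rightarrow> 'a set \<Rightarrow> bool" where
  "finite_index_subgroup G H \<longleftrightarrow> subgroup H G \<and> finite (rcosets\<^bsub>G\<^esub> H)"

definition virtually_abelian :: "('a, 'b) monoid_scheme \<Rightarrow> bool" where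
  "virtually_abelian G \<longleftrightarrow> group G \<and>
     (\<exists>H. finite_index_subgroup G H \<and> comm_group (G\<lparr>carrier := H\<rparr>))"

(* H is a free abelian subgroup: isomorphic to a free abelian group on some
   (countable) basis set; subgroups of countable groups have countable bases *)
definition free_abelian_subgroup :: "('a, 'b) monoid_scheme \<Rightarrow> 'a set \<Rightarrow> bool" where
  "free_abelian_subgroup G H \<longleftrightarrow> subgroup H G \<and>
     (\<exists>B :: nat set. G\<lparr>carrier := H\<rparr> \<cong> free_Abelian_group B)"

end

theory Submission
  imports Defs "HOL-Library.Countable"
begin

text \<open>The example is the wreath product \<open>\<int> \<wr> C\<^sub>2 = \<int>\<^sup>2 \<rtimes> C\<^sub>2\<close>, the involution swapping
  the two coordinates, generated by \<open>a = (1,0)\<close>, \<open>a\<inverse>\<close> and the involution \<open>t\<close>.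
  Every finite-index subgroup, free abelian or not, contains a positive power of every element,
  hence \<open>(k,0)\<close> and \<open>(0,k)\<close> for some \<open>k > 0\<close>.
  Conjugation by \<open>a\<^sup>\<plusminus>\<^sup>1\<close> fixes a translation and conjugation by \<open>t\<close> swaps its coordinates,
  so \<open>\<kappa>(x,y) = (|(x,y)| - |(y,x)|) / 3|(x,y)|\<close>. Since \<open>|(k,0)| = k\<close> while \<open>(0,k) = t a\<^sup>k t\<close>
  needs a letter \<open>t\<close>, we get \<open>|(0,k)| > k\<close>, whence \<open>\<kappa>(k,0) < 0 < \<kappa>(0,k)\<close>.\<close>

lemma word_prod_Nil [simp]: "word_prod G [] = \<one>\<^bsub>G\<^esub>"
  by (simp add: word_prod_def)

lemma word_prod_Cons [simp]: "word_prod G (a # ws) = a \<otimes>\<^bsub>G\<^esub> word_prod G ws"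
  by (simp add: word_prod_def)

lemma (in monoid) word_prod_closed: "set ws \<subseteq> carrier G \<Longrightarrow> word_prod G ws \<in> carrier G"
  by (induction ws) auto

lemma word_prod_in_generate: "set ws \<subseteq> S \<Longrightarrow> word_prod G ws \<in> generate G S"
  by (induction ws) (auto intro: generate.one generate.incl generate.eng)

lemma (in monoid) word_prod_append:
  "set xs \<subseteq> carrier G \<Longrightarrow> set ys \<subseteq> carrier G \<Longrightarrow>
    word_prod G (xs @ ys) = word_prod G xs \<otimes> word_prod G ys"
proof (induction xs)
  case Nil
  then show ?case using word_prod_closed by simp
next
  case (Cons x xs)
  then show ?case using word_prod_closed by (simp add: m_assoc)
qed

lemma (in group) generate_imp_word_prod:
  assumes "S \<subseteq> carrier G" "\<forall>a\<in>S. inv a \<in> S" "g \<in> generate G S"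
  shows "\<exists>ws. set ws \<subseteq> S \<and> word_prod G ws = g"
  using assms(3)
proof induction
  case one
  show ?case by (intro exI[of _ "[]"]) simp
next
  case (incl h)
  then show ?case using assms(1) by (intro exI[of _ "[h]"]) auto
next
  case (inv h)
  then show ?case using assms by (intro exI[of _ "[inv h]"]) auto
next
  case (eng h1 h2)
  then obtain xs ys where "set xs \<subseteq> S" "word_prod G xs = h1" "set ys \<subseteq> S" "word_prod G ys = h2"
    by blast
  then show ?case using assms(1) by (intro exI[of _ "xs @ ys"]) (auto simp: word_prod_append)
qed

lemma word_length_le: "set ws \<subseteq> S \<Longrightarrow> word_prod G ws = g \<Longrightarrow> word_length G S g \<le> length ws"
  unfolding word_length_def by (rule Least_le) auto

lemma (in group) shortest_word_exists:
  assumes "sym_gen_set G S" "g \<in> carrier G"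
  shows "\<exists>ws. set ws \<subseteq> S \<and> length ws = word_length G S g \<and> word_prod G ws = g"
proof -
  have "\<exists>n ws. set ws \<subseteq> S \<and> length ws = n \<and> word_prod G ws = g"
    using assms generate_imp_word_prod by (auto simp: sym_gen_set_def)
  then show ?thesis
    unfolding word_length_def by (rule LeastI_ex)
qed

lemma (in group) word_length_lower_bound:
  fixes f :: "'a \<Rightarrow> nat"
  assumes "sym_gen_set G S" "g \<in> carrier G" "f \<one> = 0"
    and step: "\<And>s h. s \<in> S \<Longrightarrow> h \<in> carrier G \<Longrightarrow> f (s \<otimes> h) \<le> f h + 1"
  shows "f g \<le> word_length G S g"
proof -
  have S: "S \<subseteq> carrier G" using assms(1) by (simp add: sym_gen_set_def)
  have word_bound: "f (word_prod G ws) \<le> length ws" if "set ws \<subseteq> S" for ws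
    using that
  proof (induction ws)
    case Nil
    then show ?case by (simp add: assms(3))
  next
    case (Cons s ws)
    have "s \<in> S" "set ws \<subseteq> S" using Cons.prems by auto
    then have "f (s \<otimes> word_prod G ws) \<le> f (word_prod G ws) + 1"
      using S word_prod_closed by (intro step) auto
    then show ?case using Cons.IH \<open>set ws \<subseteq> S\<close> by simp
  qed
  obtain ws where "set ws \<subseteq> S" "length ws = word_length G S g" "word_prod G ws = g"
    using shortest_word_exists[OF assms(1,2)] by blast
  then show ?thesis using word_bound[of ws] by simp
qed

lemma (in group) finite_index_subgroup_pow_mem:
  assumes "finite_index_subgroup G H" "g \<in> carrier G"
  shows "\<exists>n>(0::nat). g [^] n \<in> H"
proof -
  have H: "subgroup H G" "finite (rcosets H)"
    using assms(1) by (auto simp: finite_index_subgroup_def)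
  have "range (\<lambda>i::nat. H #> g [^] i) \<subseteq> rcosets H"
    using subgroup.subset[OF H(1)] assms(2) by (auto intro: rcosetsI)
  then have "\<not> inj (\<lambda>i::nat. H #> g [^] i)"
    using H(2) finite_subset finite_imageD by blast
  then obtain i j :: nat where "i \<noteq> j" "H #> g [^] i = H #> g [^] j"
    unfolding inj_def by blast
  then obtain i j :: nat where ij: "i < j" "H #> g [^] i = H #> g [^] j"
    by (metis linorder_neqE_nat)
  have "g [^] j \<in> H #> g [^] i"
    using repr_independenceD[OF H(1) _ ij(2)] assms(2) by simp
  then have "g [^] j \<otimes> inv (g [^] i) \<in> H"
    using subgroup.rcos_module_imp[OF H(1) is_group] assms(2) by simp
  moreover have "g [^] j = g [^] (j - i) \<otimes> g [^] i"
    using ij(1) assms(2) by (simp add: nat_pow_mult)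
  ultimately have "g [^] (j - i) \<in> H"
    using assms(2) by (simp add: m_assoc)
  then show ?thesis using ij(1) by (intro exI[of _ "j - i"]) simp
qed

text \<open>\<open>(x, y, e)\<close> is the translation by \<open>(x, y)\<close> followed by the coordinate swap if \<open>e\<close>;
  the group is transported to \<^typ>\<open>nat\<close> along the injection \<^const>\<open>to_nat\<close>.\<close>

type_synonym wr = "int \<times> int \<times> bool"

fun wr_mul :: "wr \<Rightarrow> wr \<Rightarrow> wr" where
  "wr_mul (x1, y1, e1) (x2, y2, e2) =
     (if e1 then (x1 + y2, y1 + x2, \<not> e2) else (x1 + x2, y1 + y2, e2))"

fun wr_inv :: "wr \<Rightarrow> wr" where
  "wr_inv (x, y, e) = (if e then (- y, - x, e) else (- x, - y, e))"

abbreviation enc :: "wr \<Rightarrow> nat" where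
  "enc \<equiv> to_nat"

definition Z_wr_C2 :: "nat monoid" where
  "Z_wr_C2 = \<lparr>carrier = range enc, monoid.mult = (\<lambda>a b. enc (wr_mul (from_nat a) (from_nat b))),
     one = enc (0, 0, False)\<rparr>"

definition Z_wr_C2_gens :: "nat set" where
  "Z_wr_C2_gens = {enc (1, 0, False), enc (- 1, 0, False), enc (0, 0, True)}"

lemma carrier_Z_wr_C2: "carrier Z_wr_C2 = range enc"
  by (simp add: Z_wr_C2_def)

lemma enc_in_carrier [simp]: "enc p \<in> carrier Z_wr_C2"
  by (simp add: Z_wr_C2_def)

lemma mult_Z_wr_C2 [simp]: "enc p \<otimes>\<^bsub>Z_wr_C2\<^esub> enc q = enc (wr_mul p q)"
  by (simp add: Z_wr_C2_def)

lemma one_Z_wr_C2: "\<one>\<^bsub>Z_wr_C2\<^esub> = enc (0, 0, False)"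
  by (simp add: Z_wr_C2_def)

lemma wr_mul_assoc: "wr_mul (wr_mul p q) r = wr_mul p (wr_mul q r)"
  by (cases p; cases q; cases r) auto

lemma group_Z_wr_C2: "group Z_wr_C2"
proof (rule groupI)
  show "x \<otimes>\<^bsub>Z_wr_C2\<^esub> y \<otimes>\<^bsub>Z_wr_C2\<^esub> z = x \<otimes>\<^bsub>Z_wr_C2\<^esub> (y \<otimes>\<^bsub>Z_wr_C2\<^esub> z)"
    if "x \<in> carrier Z_wr_C2" "y \<in> carrier Z_wr_C2" "z \<in> carrier Z_wr_C2" for x y z
    using that by (auto simp: carrier_Z_wr_C2 wr_mul_assoc)
  show "\<one>\<^bsub>Z_wr_C2\<^esub> \<otimes>\<^bsub>Z_wr_C2\<^esub> x = x" if "x \<in> carrier Z_wr_C2" for x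
    using that by (auto simp: carrier_Z_wr_C2 one_Z_wr_C2)
  show "\<exists>y\<in>carrier Z_wr_C2. y \<otimes>\<^bsub>Z_wr_C2\<^esub> x = \<one>\<^bsub>Z_wr_C2\<^esub>" if x: "x \<in> carrier Z_wr_C2" for x
  proof -
    obtain p where "x = enc p" using x unfolding carrier_Z_wr_C2 by blast
    then show ?thesis by (intro bexI[of _ "enc (wr_inv p)"]) (cases p, auto simp: one_Z_wr_C2)
  qed
qed (auto simp: carrier_Z_wr_C2 one_Z_wr_C2)

lemma inv_Z_wr_C2 [simp]: "inv\<^bsub>Z_wr_C2\<^esub> (enc p) = enc (wr_inv p)"
  by (rule group.inv_equality[OF group_Z_wr_C2]) (cases p, auto simp: one_Z_wr_C2)

lemma pow_translation_Z_wr_C2: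
  "enc (x, y, False) [^]\<^bsub>Z_wr_C2\<^esub> n = enc (int n * x, int n * y, False)"
  by (induction n) (auto simp: one_Z_wr_C2 algebra_simps)

definition translation_coset :: "bool \<Rightarrow> nat set" where
  "translation_coset e = enc ` {(x, y, e) | x y. True}"

lemma subgroup_translations: "subgroup (translation_coset False) Z_wr_C2"
  by (rule group.subgroupI[OF group_Z_wr_C2]) (auto simp: translation_coset_def)

lemma comm_group_translations: "comm_group (Z_wr_C2\<lparr>carrier := translation_coset False\<rparr>)"
  by (rule group.group_comm_groupI[OF group.subgroup_imp_group[OF group_Z_wr_C2 subgroup_translations]])
    (auto simp: translation_coset_def)

lemma rcoset_translations: "translation_coset False #>\<^bsub>Z_wr_C2\<^esub> enc (x, y, e) = translation_coset e"
proof
  show "translation_coset e \<subseteq> translation_coset False #>\<^bsub>Z_wr_C2\<^esub> enc (x, y, e)"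
  proof
    fix g assume "g \<in> translation_coset e"
    then obtain u v where "g = enc (u, v, e)" by (auto simp: translation_coset_def)
    then have "g = enc (u - x, v - y, False) \<otimes>\<^bsub>Z_wr_C2\<^esub> enc (x, y, e)" by simp
    then show "g \<in> translation_coset False #>\<^bsub>Z_wr_C2\<^esub> enc (x, y, e)"
      unfolding r_coset_def translation_coset_def by blast
  qed
qed (auto simp: r_coset_def translation_coset_def)

lemma virtually_abelian_Z_wr_C2: "virtually_abelian Z_wr_C2"
proof -
  have "rcosets\<^bsub>Z_wr_C2\<^esub> (translation_coset False) \<subseteq> range translation_coset"
    by (auto simp: RCOSETS_def carrier_Z_wr_C2 rcoset_translations)
  then have "finite (rcosets\<^bsub>Z_wr_C2\<^esub> (translation_coset False))"
    by (rule finite_subset) simp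
  then show ?thesis
    using group_Z_wr_C2 subgroup_translations comm_group_translations
    unfolding virtually_abelian_def finite_index_subgroup_def by blast
qed

definition shift_word :: "int \<Rightarrow> nat list" where
  "shift_word n = (if n \<ge> 0 then replicate (nat n) (enc (1, 0, False))
                   else replicate (nat (- n)) (enc (- 1, 0, False)))"

lemma set_shift_word: "set (shift_word n) \<subseteq> Z_wr_C2_gens"
  by (auto simp: shift_word_def Z_wr_C2_gens_def)

lemma length_shift_word: "length (shift_word n) = nat \<bar>n\<bar>"
  by (simp add: shift_word_def)

lemma word_prod_shift_word: "word_prod Z_wr_C2 (shift_word n) = enc (n, 0, False)"
proof -
  have "word_prod Z_wr_C2 (replicate m (enc (c, 0, False))) = enc (int m * c, 0, False)" for m c
    by (induction m) (auto simp: one_Z_wr_C2 algebra_simps)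
  then show ?thesis by (auto simp: shift_word_def)
qed

fun normal_word :: "wr \<Rightarrow> nat list" where
  "normal_word (x, y, e) = shift_word x @ enc (0, 0, True) # shift_word y @ enc (0, 0, True) #
     (if e then [enc (0, 0, True)] else [])"

lemma word_prod_normal_word: "word_prod Z_wr_C2 (normal_word p) = enc p"
proof -
  have "set (shift_word n) \<subseteq> carrier Z_wr_C2" for n
    by (auto simp: shift_word_def)
  then show ?thesis
    by (cases p) (simp add: monoid.word_prod_append[OF group.is_monoid[OF group_Z_wr_C2]]
        word_prod_shift_word one_Z_wr_C2)
qed

lemma set_normal_word: "set (normal_word p) \<subseteq> Z_wr_C2_gens"
  using set_shift_word by (cases p) (auto simp: Z_wr_C2_gens_def)

lemma sym_gen_set_Z_wr_C2: "sym_gen_set Z_wr_C2 Z_wr_C2_gens"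
proof -
  have "enc p \<in> generate Z_wr_C2 Z_wr_C2_gens" for p
    by (metis word_prod_in_generate set_normal_word word_prod_normal_word)
  then have "carrier Z_wr_C2 \<subseteq> generate Z_wr_C2 Z_wr_C2_gens"
    by (auto simp: carrier_Z_wr_C2)
  moreover have "Z_wr_C2_gens \<subseteq> carrier Z_wr_C2"
    by (simp add: Z_wr_C2_gens_def)
  then have "generate Z_wr_C2 Z_wr_C2_gens \<subseteq> carrier Z_wr_C2"
    using group.generate_in_carrier[OF group_Z_wr_C2] by blast
  ultimately show ?thesis
    by (auto simp: sym_gen_set_def Z_wr_C2_gens_def one_Z_wr_C2)
qed

fun wr_norm :: "wr \<Rightarrow> nat" where
  "wr_norm (x, y, e) = nat \<bar>x\<bar> + nat \<bar>y\<bar> + (if y = 0 then 0 else 1)"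

text \<open>Left multiplication by \<open>t\<close> swaps \<open>x\<close> and \<open>y\<close>, so the indicator term lets \<^const>\<open>wr_norm\<close>
  grow by at most one per letter while still charging the vertical direction.\<close>

lemma wr_norm_le_word_length: "wr_norm p \<le> word_length Z_wr_C2 Z_wr_C2_gens (enc p)"
proof -
  have "(wr_norm \<circ> from_nat) g \<le> word_length Z_wr_C2 Z_wr_C2_gens g" if "g \<in> carrier Z_wr_C2" for g
  proof (rule group.word_length_lower_bound[OF group_Z_wr_C2 sym_gen_set_Z_wr_C2 that])
    show "(wr_norm \<circ> from_nat) \<one>\<^bsub>Z_wr_C2\<^esub> = 0" by (simp add: one_Z_wr_C2)
    show "(wr_norm \<circ> from_nat) (s \<otimes>\<^bsub>Z_wr_C2\<^esub> h) \<le> (wr_norm \<circ> from_nat) h + 1"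
      if "s \<in> Z_wr_C2_gens" "h \<in> carrier Z_wr_C2" for s h
      using that by (auto simp: Z_wr_C2_gens_def carrier_Z_wr_C2)
  qed
  from this[of "enc p"] show ?thesis by simp
qed

lemma word_length_horizontal:
  assumes "k \<ge> 0"
  shows "word_length Z_wr_C2 Z_wr_C2_gens (enc (k, 0, False)) = nat k"
proof (rule antisym)
  show "word_length Z_wr_C2 Z_wr_C2_gens (enc (k, 0, False)) \<le> nat k"
    using word_length_le[OF set_shift_word[of k] word_prod_shift_word[of k]] assms
    by (simp add: length_shift_word)
  show "nat k \<le> word_length Z_wr_C2 Z_wr_C2_gens (enc (k, 0, False))"
    using wr_norm_le_word_length[of "(k, 0, False)"] by simp
qed

lemma word_length_vertical: "k > 0 \<Longrightarrow> nat k < word_length Z_wr_C2 Z_wr_C2_gens (enc (0, k, False))"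
  using wr_norm_le_word_length[of "(0, k, False)"] by simp

lemma curvature_translation:
  "curvature Z_wr_C2 Z_wr_C2_gens (enc (x, y, False)) =
    (real (word_length Z_wr_C2 Z_wr_C2_gens (enc (x, y, False)))
      - real (word_length Z_wr_C2 Z_wr_C2_gens (enc (y, x, False))))
    / (3 * real (word_length Z_wr_C2 Z_wr_C2_gens (enc (x, y, False))))"
proof -
  have "(a - (2 * a + b) / 3) / a = (a - b) / (3 * a)" for a b :: real
    by (cases "a = 0") (simp_all add: field_simps)
  then show ?thesis
    by (simp add: curvature_def Av_def Z_wr_C2_gens_def)
qed

lemma curvature_horizontal_neg: "k > 0 \<Longrightarrow> curvature Z_wr_C2 Z_wr_C2_gens (enc (k, 0, False)) < 0"
  using word_length_horizontal[of k] word_length_vertical[of k]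
  by (simp add: curvature_translation divide_neg_pos)

lemma curvature_vertical_pos: "k > 0 \<Longrightarrow> curvature Z_wr_C2 Z_wr_C2_gens (enc (0, k, False)) > 0"
  using word_length_horizontal[of k] word_length_vertical[of k]
  by (simp add: curvature_translation)

theorem mainTheorem4:
  shows "\<exists>(G :: nat monoid) S. group G \<and> virtually_abelian G \<and> sym_gen_set G S \<and>
    (\<forall>H. finite_index_subgroup G H \<and> free_abelian_subgroup G H \<longrightarrow>
      (\<exists>g\<in>H. g \<noteq> \<one>\<^bsub>G\<^esub> \<and> curvature G S g > 0) \<and>
      (\<exists>g'\<in>H. g' \<noteq> \<one>\<^bsub>G\<^esub> \<and> curvature G S g' < 0))"
proof (intro exI[of _ Z_wr_C2] exI[of _ Z_wr_C2_gens] conjI allI impI)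
  show "group Z_wr_C2" "virtually_abelian Z_wr_C2" "sym_gen_set Z_wr_C2 Z_wr_C2_gens"
    by (rule group_Z_wr_C2 virtually_abelian_Z_wr_C2 sym_gen_set_Z_wr_C2)+
next
  fix H assume "finite_index_subgroup Z_wr_C2 H \<and> free_abelian_subgroup Z_wr_C2 H"
  then have H: "finite_index_subgroup Z_wr_C2 H" by blast
  obtain m where "m > 0" "enc (0, int m, False) \<in> H"
    using group.finite_index_subgroup_pow_mem[OF group_Z_wr_C2 H, of "enc (0, 1, False)"]
    by (auto simp: pow_translation_Z_wr_C2)
  then show "\<exists>g\<in>H. g \<noteq> \<one>\<^bsub>Z_wr_C2\<^esub> \<and> curvature Z_wr_C2 Z_wr_C2_gens g > 0"
    using curvature_vertical_pos[of "int m"]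
    by (intro bexI[of _ "enc (0, int m, False)"]) (auto simp: one_Z_wr_C2)
  obtain n where "n > 0" "enc (int n, 0, False) \<in> H"
    using group.finite_index_subgroup_pow_mem[OF group_Z_wr_C2 H, of "enc (1, 0, False)"]
    by (auto simp: pow_translation_Z_wr_C2)
  then show "\<exists>g'\<in>H. g' \<noteq> \<one>\<^bsub>Z_wr_C2\<^esub> \<and> curvature Z_wr_C2 Z_wr_C2_gens g' < 0"
    using curvature_horizontal_neg[of "int n"]
    by (intro bexI[of _ "enc (int n, 0, False)"]) (auto simp: one_Z_wr_C2)
qed

end
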